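(* Fix $\epsilon>0$ and let $N>0$ be such that: whenever $K_{\alpha\beta}(x,y)>\epsilon$ for some $\alpha,\beta\in S(1)$ and some $(x,y)\in Q_{\mathbf x}\times Q_{\mathbf y}$, then $K_{\alpha\beta}(a,b)>\epsilon/2$ for all $(a,b)\in Q_{\mathbf x}\times Q_{\mathbf y}$. Let $\lambda\mapsto r_\lambda$ satisfy $r_\lambda\to\infty$. Then, as $\lambda\to\infty$, the number of singular pairs $(Q,Q')\in\mathcal Q_\lambda\times\mathcal Q_\lambda$ is $o(r_\lambda^2\log r_\lambda)$.
   Context: $K(x,y)=2\pi J_0(\|x-y\|)$ on $\mathbb R^2\times\mathbb R^2$ ($J_0$ the Bessel function of the first kind of order 0); $K_{\alpha\beta}=\partial_x^\alpha\partial_y^\beta K$; $S(1)$ is the set of multi-indices in $\mathbb N^2$ of order $\le1$. For $\mathbf z\in\mathbb Z^2$, $Q_{\mathbf z}=\mathbf z/N+[0,1/N)^2$, and $\mathcal Q_\lambda$ is the set of those $Q_{\mathbf z}$ intersecting the ball of radius $r_\lambda$ centred at the origin. Two squares $Q_{\mathbf x},Q_{\mathbf y}$ are singular if there exist $(x,y)\in Q_{\mathbf x}\times Q_{\mathbf y}$ and $\alpha,\beta\in S(1)$ with $K_{\alpha\beta}(x,y)>\epsilon$. *)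

theory Defs
  imports "HOL-Analysis.Analysis" "HOL-Library.Landau_Symbols"
begin

definition bessel_J0 :: "real \<Rightarrow> real" where
  "bessel_J0 r = (\<Sum>k. (-1) ^ k / (fact k)^2 * (r / 2) ^ (2 * k))"

definition kernelK :: "real^2 \<Rightarrow> real^2 \<Rightarrow> real" where
  "kernelK x y = 2 * pi * bessel_J0 (norm (x - y))"

definition pdiff :: "2 \<Rightarrow> (real^2 \<Rightarrow> real) \<Rightarrow> real^2 \<Rightarrow> real" where
  "pdiff i f x = deriv (\<lambda>t. f (x + t *\<^sub>R axis i 1)) 0"

definition pdiff_multi :: "nat \<times> nat \<Rightarrow> (real^2 \<Rightarrow> real) \<Rightarrow> real^2 \<Rightarrow> real" where
  "pdiff_multi \<alpha> f = (pdiff 1 ^^ fst \<alpha>) ((pdiff 2 ^^ snd \<alpha>) f)"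

definition K_ab :: "nat \<times> nat \<Rightarrow> nat \<times> nat \<Rightarrow> real^2 \<Rightarrow> real^2 \<Rightarrow> real" where
  "K_ab \<alpha> \<beta> x y = pdiff_multi \<alpha> (\<lambda>x'. pdiff_multi \<beta> (\<lambda>y'. kernelK x' y') y) x"

definition S1 :: "(nat \<times> nat) set" where
  "S1 = {\<alpha>. fst \<alpha> + snd \<alpha> \<le> 1}"

definition sq :: "real \<Rightarrow> int \<times> int \<Rightarrow> (real^2) set" where
  "sq N z = {p. real_of_int (fst z) / N \<le> p$1 \<and> p$1 < (real_of_int (fst z) + 1) / N \<and>
                real_of_int (snd z) / N \<le> p$2 \<and> p$2 < (real_of_int (snd z) + 1) / N}"

text \<open>Indices of the squares meeting the ball of radius r centred at 0 (the family Q_lambda,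
  with r = r_lambda).  Since z \<mapsto> Q_z is injective for N > 0, squares are identified with
  their indices.\<close>
definition sq_family :: "real \<Rightarrow> real \<Rightarrow> (int \<times> int) set" where
  "sq_family N r = {z. sq N z \<inter> ball 0 r \<noteq> {}}"

definition singular_pair :: "real \<Rightarrow> real \<Rightarrow> int \<times> int \<Rightarrow> int \<times> int \<Rightarrow> bool" where
  "singular_pair \<epsilon> N zx zy \<longleftrightarrow>
     (\<exists>x\<in>sq N zx. \<exists>y\<in>sq N zy. \<exists>\<alpha>\<in>S1. \<exists>\<beta>\<in>S1. K_ab \<alpha> \<beta> x y > \<epsilon>)"

end

(* Write J0(r) = g(r^2) with g an entire power series; then K and its derivatives of order at most
   one in x and in y are 2 pi g, g' and g'' at |x - y|^2 multiplied by polynomials in x - y.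
   Along any solution of Bessel's equation t y'' + y' + t y = 0 the energy
   E(t) = t (y^2 + y'^2) + y y' + y^2 / (2 t) is nonincreasing for t >= 1 and dominates
   t (y^2 + y'^2) / 2, so J0 and J0' are O(t^(-1/2)).  Hence every K_ab(x, y) tends to 0 as
   |x - y| -> oo, singular pairs of squares lie at bounded index distance from each other, and
   their number is O(r^2) = o(r^2 log r). *)

theory Submission
  imports Defs "HOL-Real_Asymp.Real_Asymp"
begin

section \<open>Bessel's function as a power series in the squared radius\<close>

definition J0_coeff :: "nat \<Rightarrow> real" where
  "J0_coeff k = (-1) ^ k / (4 ^ k * (fact k)\<^sup>2)"

text \<open>Working in \<open>s = r\<^sup>2\<close> keeps every derivative of the kernel smooth on the diagonal \<open>x = y\<close>.\<close>

definition J0_sq :: "real \<Rightarrow> real" where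
  "J0_sq s = (\<Sum>k. J0_coeff k * s ^ k)"

definition J0_sq' :: "real \<Rightarrow> real" where
  "J0_sq' s = (\<Sum>k. diffs J0_coeff k * s ^ k)"

definition J0_sq'' :: "real \<Rightarrow> real" where
  "J0_sq'' s = (\<Sum>k. diffs (diffs J0_coeff) k * s ^ k)"

lemma bessel_J0_eq_J0_sq: "bessel_J0 r = J0_sq (r\<^sup>2)"
proof -
  have "(r / 2) ^ (2 * k) = (r\<^sup>2) ^ k / 4 ^ k" for k
    by (simp add: power_mult power_divide)
  then show ?thesis
    unfolding bessel_J0_def J0_sq_def J0_coeff_def by (simp add: mult.commute)
qed

lemma abs_J0_coeff_le: "\<bar>J0_coeff k\<bar> \<le> inverse (fact k)"
proof -
  have "fact k \<le> (fact k)\<^sup>2 * (1 :: real)"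
    by (simp add: power2_eq_square)
  also have "\<dots> \<le> (fact k)\<^sup>2 * 4 ^ k"
    by (intro mult_left_mono) auto
  finally have "inverse ((fact k)\<^sup>2 * 4 ^ k) \<le> inverse (fact k :: real)"
    by (intro le_imp_inverse_le) auto
  then show ?thesis
    by (simp add: J0_coeff_def abs_divide abs_mult mult.commute divide_inverse)
qed

lemma summable_J0_coeff: "summable (\<lambda>k. J0_coeff k * s ^ k)"
proof (rule summable_comparison_test[OF _ summable_exp[of "\<bar>s\<bar>"]])
  show "\<exists>N. \<forall>k\<ge>N. norm (J0_coeff k * s ^ k) \<le> inverse (fact k) * \<bar>s\<bar> ^ k"
    using abs_J0_coeff_le by (auto simp: abs_mult power_abs intro!: mult_right_mono)
qed

lemma summable_diffs_J0_coeff: "summable (\<lambda>k. diffs J0_coeff k * s ^ k)"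
  by (rule termdiff_converges_all) (rule summable_J0_coeff)

lemma J0_sq_has_derivative: "(J0_sq has_real_derivative J0_sq' s) (at s)"
  unfolding J0_sq_def J0_sq'_def
  by (rule termdiffs_strong_converges_everywhere) (rule summable_J0_coeff)

lemma J0_sq'_has_derivative: "(J0_sq' has_real_derivative J0_sq'' s) (at s)"
  unfolding J0_sq'_def J0_sq''_def
  by (rule termdiffs_strong_converges_everywhere) (rule summable_diffs_J0_coeff)

lemma J0_coeff_Suc: "(real k + 1)\<^sup>2 * J0_coeff (Suc k) = - J0_coeff k / 4"
  unfolding J0_coeff_def by (simp add: power2_eq_square divide_simps add.commute)

lemma J0_sq_ode: "s * J0_sq'' s + J0_sq' s + J0_sq s / 4 = 0"
proof -
  define c where "c k = real k * (real k + 1) * J0_coeff (Suc k) * s ^ k" for k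
  have "(\<lambda>k. s * (diffs (diffs J0_coeff) k * s ^ k)) sums (s * J0_sq'' s)"
    unfolding J0_sq''_def
    by (intro sums_mult summable_sums termdiff_converges_all summable_diffs_J0_coeff)
  moreover have "(\<lambda>k. s * (diffs (diffs J0_coeff) k * s ^ k)) = (\<lambda>k. c (Suc k))"
    by (auto simp: c_def diffs_def algebra_simps)
  ultimately have "c sums (s * J0_sq'' s)"
    using sums_Suc_iff[of c] by (simp add: c_def)
  moreover have "(\<lambda>k. diffs J0_coeff k * s ^ k) sums J0_sq' s"
    unfolding J0_sq'_def by (intro summable_sums summable_diffs_J0_coeff)
  ultimately have "(\<lambda>k. c k + diffs J0_coeff k * s ^ k) sums (s * J0_sq'' s + J0_sq' s)"
    by (rule sums_add)
  moreover have "c k + diffs J0_coeff k * s ^ k = - (J0_coeff k * s ^ k) / 4" for k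
  proof -
    have "c k + diffs J0_coeff k * s ^ k = (real k + 1)\<^sup>2 * J0_coeff (Suc k) * s ^ k"
      by (simp add: c_def diffs_def power2_eq_square algebra_simps)
    also have "\<dots> = - (J0_coeff k * s ^ k) / 4"
      by (simp add: J0_coeff_Suc)
    finally show ?thesis .
  qed
  moreover have "(\<lambda>k. - (J0_coeff k * s ^ k) / 4) sums (- J0_sq s / 4)"
    unfolding J0_sq_def by (intro sums_divide sums_minus summable_sums summable_J0_coeff)
  ultimately have "s * J0_sq'' s + J0_sq' s = - J0_sq s / 4"
    using sums_unique2 by simp
  then show ?thesis by simp
qed

section \<open>Decay of solutions of Bessel's equation\<close>

definition bessel0_energy :: "(real \<Rightarrow> real) \<Rightarrow> (real \<Rightarrow> real) \<Rightarrow> real \<Rightarrow> real" where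
  "bessel0_energy y y' t = t * ((y t)\<^sup>2 + (y' t)\<^sup>2) + y t * y' t + (y t)\<^sup>2 / (2 * t)"

lemma bessel0_energy_has_derivative:
  assumes y: "(y has_real_derivative y' t) (at t)" and y': "(y' has_real_derivative y'' t) (at t)"
    and ode: "t * y'' t + y' t + t * y t = 0" and "t > 0"
  shows "(bessel0_energy y y' has_real_derivative - (y t)\<^sup>2 / (2 * t\<^sup>2)) (at t)"
proof -
  have y'': "y'' t = - (y' t + t * y t) / t"
    using ode \<open>t > 0\<close> by (simp add: field_simps)
  show ?thesis
    unfolding bessel0_energy_def [abs_def] using \<open>t > 0\<close>
    by (auto intro!: derivative_eq_intros y y' simp: y'' field_simps power2_eq_square)
qed

lemma bessel0_energy_ge:
  assumes "1 \<le> t"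
  shows "t / 2 * ((y t)\<^sup>2 + (y' t)\<^sup>2) \<le> bessel0_energy y y' t"
proof -
  have "0 \<le> (y t + y' t)\<^sup>2 / 2 + (t - 1) / 2 * ((y t)\<^sup>2 + (y' t)\<^sup>2) + (y t)\<^sup>2 / (2 * t)"
    using assms by (intro add_nonneg_nonneg mult_nonneg_nonneg) auto
  also have "\<dots> = bessel0_energy y y' t - t / 2 * ((y t)\<^sup>2 + (y' t)\<^sup>2)"
    by (simp add: bessel0_energy_def power2_eq_square field_simps)
  finally show ?thesis by simp
qed

lemma tendsto_zero_if_square_le_inverse:
  fixes f :: "real \<Rightarrow> real"
  assumes "eventually (\<lambda>t. (f t)\<^sup>2 \<le> C / t) at_top"
  shows "(f \<longlongrightarrow> 0) at_top"
proof -
  have "((\<lambda>t. (f t)\<^sup>2) \<longlongrightarrow> 0) at_top"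
    by (rule tendsto_sandwich[OF _ assms tendsto_const])
      (auto intro!: tendsto_divide_0 filterlim_at_top_imp_at_infinity filterlim_ident)
  then have "((\<lambda>t. sqrt ((f t)\<^sup>2)) \<longlongrightarrow> 0) at_top"
    using tendsto_real_sqrt by fastforce
  then show ?thesis
    by (simp add: tendsto_rabs_zero_iff)
qed

lemma bessel0_solution_tendsto_zero:
  assumes y: "\<And>t. 1 \<le> t \<Longrightarrow> (y has_real_derivative y' t) (at t)"
    and y': "\<And>t. 1 \<le> t \<Longrightarrow> (y' has_real_derivative y'' t) (at t)"
    and ode: "\<And>t. 1 \<le> t \<Longrightarrow> t * y'' t + y' t + t * y t = 0"
  shows "(y \<longlongrightarrow> 0) at_top" and "(y' \<longlongrightarrow> 0) at_top"
proof -
  define C where "C = 2 * bessel0_energy y y' 1"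
  have bound: "(y t)\<^sup>2 \<le> C / t \<and> (y' t)\<^sup>2 \<le> C / t" if "1 \<le> t" for t
  proof -
    have "bessel0_energy y y' t \<le> bessel0_energy y y' 1"
    proof (rule DERIV_nonpos_imp_nonincreasing[OF that])
      fix u :: real assume "1 \<le> u"
      then have "(bessel0_energy y y' has_real_derivative - (y u)\<^sup>2 / (2 * u\<^sup>2)) (at u)"
        by (intro bessel0_energy_has_derivative[where y'' = y''] y y' ode) auto
      then show "\<exists>D. (bessel0_energy y y' has_real_derivative D) (at u) \<and> D \<le> 0"
        by (intro exI[of _ "- (y u)\<^sup>2 / (2 * u\<^sup>2)"]) simp
    qed
    with bessel0_energy_ge[OF that, of y y'] that have "(y t)\<^sup>2 + (y' t)\<^sup>2 \<le> C / t"
      by (simp add: C_def field_simps)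
    then show ?thesis
      using zero_le_power2[of "y t"] zero_le_power2[of "y' t"] by linarith
  qed
  have "eventually (\<lambda>t. (y t)\<^sup>2 \<le> C / t \<and> (y' t)\<^sup>2 \<le> C / t) at_top"
    using eventually_ge_at_top[of 1] by eventually_elim (rule bound)
  then show "(y \<longlongrightarrow> 0) at_top" and "(y' \<longlongrightarrow> 0) at_top"
    by (auto intro: tendsto_zero_if_square_le_inverse elim: eventually_mono)
qed

section \<open>Decay of the kernel and its first derivatives\<close>

lemma has_real_derivative_compose_square:
  assumes "(f has_real_derivative D) (at (t\<^sup>2))"
  shows "((\<lambda>t. f (t\<^sup>2)) has_real_derivative 2 * t * D) (at t)"
proof -
  have "((\<lambda>t. t\<^sup>2) has_real_derivative 2 * t) (at t)"
    by (auto intro!: derivative_eq_intros)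
  from DERIV_chain2[OF assms this] show ?thesis
    by (simp add: mult_ac)
qed

definition bessel_J0' :: "real \<Rightarrow> real" where
  "bessel_J0' t = 2 * t * J0_sq' (t\<^sup>2)"

definition bessel_J0'' :: "real \<Rightarrow> real" where
  "bessel_J0'' t = 2 * J0_sq' (t\<^sup>2) + 4 * t\<^sup>2 * J0_sq'' (t\<^sup>2)"

lemma bessel_J0_has_derivative: "(bessel_J0 has_real_derivative bessel_J0' t) (at t)"
  unfolding bessel_J0_eq_J0_sq [abs_def] bessel_J0'_def
  by (rule has_real_derivative_compose_square[OF J0_sq_has_derivative])

lemma bessel_J0'_has_derivative: "(bessel_J0' has_real_derivative bessel_J0'' t) (at t)"
  unfolding bessel_J0'_def [abs_def] bessel_J0''_def
  using has_real_derivative_compose_square[OF J0_sq'_has_derivative]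
  by (auto intro!: derivative_eq_intros simp: power2_eq_square)

lemma bessel_J0_ode: "t * bessel_J0'' t + bessel_J0' t + t * bessel_J0 t = 0"
proof -
  have "t * bessel_J0'' t + bessel_J0' t + t * bessel_J0 t
      = 4 * t * (t\<^sup>2 * J0_sq'' (t\<^sup>2) + J0_sq' (t\<^sup>2) + J0_sq (t\<^sup>2) / 4)"
    by (simp add: bessel_J0''_def bessel_J0'_def bessel_J0_eq_J0_sq algebra_simps)
  then show ?thesis
    by (simp only: J0_sq_ode mult_zero_right)
qed

lemma bessel_J0_tendsto_zero: "(bessel_J0 \<longlongrightarrow> 0) at_top" "(bessel_J0' \<longlongrightarrow> 0) at_top"
  by (rule bessel0_solution_tendsto_zero[OF bessel_J0_has_derivative bessel_J0'_has_derivative bessel_J0_ode])+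

definition kernel_envelope :: "real \<Rightarrow> real" where
  "kernel_envelope s = \<bar>J0_sq s\<bar> + \<bar>sqrt s * J0_sq' s\<bar> + \<bar>J0_sq' s\<bar> + 2 * \<bar>s * J0_sq'' s\<bar>"

lemma kernel_envelope_tendsto_zero: "(kernel_envelope \<longlongrightarrow> 0) at_top"
proof -
  have J0_sq: "(J0_sq \<longlongrightarrow> 0) at_top"
  proof (rule Lim_transform_eventually)
    show "((\<lambda>s. bessel_J0 (sqrt s)) \<longlongrightarrow> 0) at_top"
      by (rule filterlim_compose[OF bessel_J0_tendsto_zero(1) sqrt_at_top])
    show "\<forall>\<^sub>F s in at_top. bessel_J0 (sqrt s) = J0_sq s"
      using eventually_ge_at_top[of 0] by eventually_elim (simp add: bessel_J0_eq_J0_sq)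
  qed
  have sqrt_J0_sq': "((\<lambda>s. sqrt s * J0_sq' s) \<longlongrightarrow> 0) at_top"
  proof (rule Lim_transform_eventually)
    show "((\<lambda>s. bessel_J0' (sqrt s) / 2) \<longlongrightarrow> 0) at_top"
      using tendsto_divide[OF filterlim_compose[OF bessel_J0_tendsto_zero(2) sqrt_at_top] tendsto_const, of 2]
      by simp
    show "\<forall>\<^sub>F s in at_top. bessel_J0' (sqrt s) / 2 = sqrt s * J0_sq' s"
      using eventually_ge_at_top[of 0] by eventually_elim (simp add: bessel_J0'_def)
  qed
  have J0_sq': "(J0_sq' \<longlongrightarrow> 0) at_top"
  proof (rule Lim_transform_eventually)
    have "((\<lambda>s. inverse (sqrt s)) \<longlongrightarrow> 0) at_top"
      by (rule tendsto_inverse_0_at_top[OF sqrt_at_top])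
    then show "((\<lambda>s. sqrt s * J0_sq' s * inverse (sqrt s)) \<longlongrightarrow> 0) at_top"
      using tendsto_mult[OF sqrt_J0_sq'] by fastforce
    show "\<forall>\<^sub>F s in at_top. sqrt s * J0_sq' s * inverse (sqrt s) = J0_sq' s"
      using eventually_gt_at_top[of 0] by eventually_elim simp
  qed
  have "((\<lambda>s. - J0_sq' s - J0_sq s / 4) \<longlongrightarrow> 0) at_top"
    using tendsto_diff[OF tendsto_minus[OF J0_sq'] tendsto_divide[OF J0_sq tendsto_const, of 4]] by simp
  moreover have "s * J0_sq'' s = - J0_sq' s - J0_sq s / 4" for s
    using J0_sq_ode[of s] by linarith
  ultimately have s_J0_sq'': "((\<lambda>s. s * J0_sq'' s) \<longlongrightarrow> 0) at_top"
    by simp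
  show ?thesis
    unfolding kernel_envelope_def [abs_def]
    by (intro tendsto_add_zero tendsto_mult_right_zero tendsto_rabs_zero J0_sq sqrt_J0_sq' J0_sq' s_J0_sq'')
qed

lemma kernel_envelope_ge:
  assumes "0 \<le> s"
  shows "\<bar>J0_sq s\<bar> \<le> kernel_envelope s"
    and "sqrt s * \<bar>J0_sq' s\<bar> \<le> kernel_envelope s"
    and "2 * \<bar>s * J0_sq'' s\<bar> + \<bar>J0_sq' s\<bar> \<le> kernel_envelope s"
  using assms by (auto simp: kernel_envelope_def abs_mult)

lemma kernelK_eq_J0_sq: "kernelK x y = 2 * pi * J0_sq ((norm (x - y))\<^sup>2)"
  by (simp add: kernelK_def bessel_J0_eq_J0_sq)

lemma pdiff_eqI: "((\<lambda>t. f (x + t *\<^sub>R axis i 1)) has_real_derivative D) (at 0) \<Longrightarrow> pdiff i f x = D"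
  by (simp add: pdiff_def DERIV_imp_deriv)

lemma has_real_derivative_compose_norm_square:
  fixes w v :: "'a::real_inner"
  assumes "(f has_real_derivative D) (at ((norm w)\<^sup>2))"
  shows "((\<lambda>t. f ((norm (w + t *\<^sub>R v))\<^sup>2)) has_real_derivative D * (2 * inner w v)) (at 0)"
proof -
  have "(norm (w + t *\<^sub>R v))\<^sup>2 = (norm w)\<^sup>2 + 2 * t * inner w v + t\<^sup>2 * (norm v)\<^sup>2" for t
    unfolding power2_norm_eq_inner
    by (simp add: inner_add_left inner_add_right inner_commute algebra_simps power2_eq_square)
  moreover have "((\<lambda>t. (norm w)\<^sup>2 + 2 * t * inner w v + t\<^sup>2 * (norm v)\<^sup>2)
      has_real_derivative 2 * inner w v) (at 0)"
    by (auto intro!: derivative_eq_intros)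
  ultimately have "((\<lambda>t. (norm (w + t *\<^sub>R v))\<^sup>2) has_real_derivative 2 * inner w v) (at 0)"
    by simp
  from DERIV_chain2[OF _ this] assms show ?thesis
    by simp
qed

lemma pdiff_kernelK_y:
  "pdiff i (\<lambda>y'. kernelK x y') y = - 4 * pi * J0_sq' ((norm (x - y))\<^sup>2) * (x - y) $ i"
proof (rule pdiff_eqI)
  have eq: "(\<lambda>t. kernelK x (y + t *\<^sub>R axis i 1))
      = (\<lambda>t. 2 * pi * J0_sq ((norm ((x - y) + t *\<^sub>R (- axis i 1)))\<^sup>2))"
    by (simp add: kernelK_eq_J0_sq algebra_simps)
  have "((\<lambda>t. 2 * pi * J0_sq ((norm ((x - y) + t *\<^sub>R (- axis i 1)))\<^sup>2)) has_real_derivative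
      2 * pi * (J0_sq' ((norm (x - y))\<^sup>2) * (2 * inner (x - y) (- axis i 1)))) (at 0)"
    by (intro DERIV_cmult has_real_derivative_compose_norm_square J0_sq_has_derivative)
  then show "((\<lambda>t. kernelK x (y + t *\<^sub>R axis i 1)) has_real_derivative
      - 4 * pi * J0_sq' ((norm (x - y))\<^sup>2) * (x - y) $ i) (at 0)"
    unfolding eq by (rule DERIV_cong) (simp add: inner_axis algebra_simps)
qed

lemma pdiff_kernelK_x:
  "pdiff j (\<lambda>x'. kernelK x' y) x = 4 * pi * J0_sq' ((norm (x - y))\<^sup>2) * (x - y) $ j"
proof (rule pdiff_eqI)
  have eq: "(\<lambda>t. kernelK (x + t *\<^sub>R axis j 1) y)
      = (\<lambda>t. 2 * pi * J0_sq ((norm ((x - y) + t *\<^sub>R axis j 1))\<^sup>2))"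
    by (simp add: kernelK_eq_J0_sq algebra_simps)
  have "((\<lambda>t. 2 * pi * J0_sq ((norm ((x - y) + t *\<^sub>R axis j 1))\<^sup>2)) has_real_derivative
      2 * pi * (J0_sq' ((norm (x - y))\<^sup>2) * (2 * inner (x - y) (axis j 1)))) (at 0)"
    by (intro DERIV_cmult has_real_derivative_compose_norm_square J0_sq_has_derivative)
  then show "((\<lambda>t. kernelK (x + t *\<^sub>R axis j 1) y) has_real_derivative
      4 * pi * J0_sq' ((norm (x - y))\<^sup>2) * (x - y) $ j) (at 0)"
    unfolding eq by (rule DERIV_cong) (simp add: inner_axis)
qed

lemma pdiff_pdiff_kernelK:
  "pdiff j (\<lambda>x'. pdiff i (\<lambda>y'. kernelK x' y') y) x
    = - 4 * pi * (2 * J0_sq'' ((norm (x - y))\<^sup>2) * (x - y) $ j * (x - y) $ i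
                  + J0_sq' ((norm (x - y))\<^sup>2) * axis j 1 $ i)"
proof (rule pdiff_eqI)
  have eq: "(\<lambda>t. pdiff i (\<lambda>y'. kernelK (x + t *\<^sub>R axis j 1) y') y)
      = (\<lambda>t. - 4 * pi * (J0_sq' ((norm ((x - y) + t *\<^sub>R axis j 1))\<^sup>2) * ((x - y) $ i + t * axis j 1 $ i)))"
    by (simp add: pdiff_kernelK_y algebra_simps)
  have affine: "((\<lambda>t. (x - y) $ i + t * axis j 1 $ i) has_real_derivative axis j 1 $ i) (at 0)"
    by (auto intro!: derivative_eq_intros)
  have "((\<lambda>t. - 4 * pi * (J0_sq' ((norm ((x - y) + t *\<^sub>R axis j 1))\<^sup>2) * ((x - y) $ i + t * axis j 1 $ i)))
      has_real_derivative - 4 * pi * (J0_sq'' ((norm (x - y))\<^sup>2) * (2 * inner (x - y) (axis j 1))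
        * ((x - y) $ i + 0 * axis j 1 $ i) + axis j 1 $ i * J0_sq' ((norm ((x - y) + 0 *\<^sub>R axis j 1))\<^sup>2))) (at 0)"
    by (intro DERIV_cmult DERIV_mult has_real_derivative_compose_norm_square J0_sq'_has_derivative affine)
  then show "((\<lambda>t. pdiff i (\<lambda>y'. kernelK (x + t *\<^sub>R axis j 1) y') y) has_real_derivative
      - 4 * pi * (2 * J0_sq'' ((norm (x - y))\<^sup>2) * (x - y) $ j * (x - y) $ i
                  + J0_sq' ((norm (x - y))\<^sup>2) * axis j 1 $ i)) (at 0)"
    unfolding eq by (rule DERIV_cong) (simp add: inner_axis algebra_simps)
qed

lemma S1_eq: "S1 = {(0, 0), (1, 0), (0, 1)}"
  by (auto simp: S1_def)

lemma K_ab_S1_cases: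
  assumes "\<alpha> \<in> S1" "\<beta> \<in> S1"
  obtains "K_ab \<alpha> \<beta> x y = kernelK x y"
  | i where "K_ab \<alpha> \<beta> x y = pdiff i (\<lambda>y'. kernelK x y') y"
  | j where "K_ab \<alpha> \<beta> x y = pdiff j (\<lambda>x'. kernelK x' y) x"
  | i j where "K_ab \<alpha> \<beta> x y = pdiff j (\<lambda>x'. pdiff i (\<lambda>y'. kernelK x' y') y) x"
  using assms by (auto simp: S1_eq K_ab_def pdiff_multi_def)

lemma abs_K_ab_le:
  assumes "\<alpha> \<in> S1" "\<beta> \<in> S1"
  shows "\<bar>K_ab \<alpha> \<beta> x y\<bar> \<le> 4 * pi * kernel_envelope ((norm (x - y))\<^sup>2)"
proof -
  define s where "s = (norm (x - y))\<^sup>2"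
  define w where "w = x - y"
  have w: "\<bar>w $ i\<bar> \<le> sqrt s" for i
    using component_le_norm_cart[of w i] by (simp add: s_def w_def)
  have ww: "\<bar>w $ j * w $ i\<bar> \<le> s" for i j
    using mult_mono[OF w[of j] w[of i]] by (simp add: abs_mult s_def power2_eq_square)
  have s0: "0 \<le> s"
    by (simp add: s_def)
  have K: "\<bar>kernelK x y\<bar> \<le> 4 * pi * kernel_envelope s"
  proof -
    have "\<bar>kernelK x y\<bar> = 2 * pi * \<bar>J0_sq s\<bar>"
      by (simp add: kernelK_eq_J0_sq abs_mult s_def)
    also have "\<dots> \<le> 4 * pi * \<bar>J0_sq s\<bar>"
      by (simp add: mult_right_mono)
    also have "\<dots> \<le> 4 * pi * kernel_envelope s"
      using kernel_envelope_ge(1)[OF s0] by simp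
    finally show ?thesis .
  qed
  have Ky: "\<bar>4 * pi * J0_sq' s * w $ i\<bar> \<le> 4 * pi * kernel_envelope s" for i
  proof -
    have "\<bar>J0_sq' s * w $ i\<bar> \<le> sqrt s * \<bar>J0_sq' s\<bar>"
      using mult_left_mono[OF w[of i] abs_ge_zero[of "J0_sq' s"]] by (simp add: abs_mult mult.commute)
    with kernel_envelope_ge(2)[OF s0] show ?thesis by (simp add: abs_mult)
  qed
  have Kxy: "\<bar>4 * pi * (2 * J0_sq'' s * w $ j * w $ i + J0_sq' s * axis j 1 $ i)\<bar>
      \<le> 4 * pi * kernel_envelope s" for i j
  proof -
    have "\<bar>J0_sq'' s * (w $ j * w $ i)\<bar> \<le> \<bar>s * J0_sq'' s\<bar>"
      using s0 mult_left_mono[OF ww[of j i] abs_ge_zero[of "J0_sq'' s"]] by (simp add: abs_mult mult.commute)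
    moreover have "\<bar>J0_sq' s * axis j 1 $ i\<bar> \<le> \<bar>J0_sq' s\<bar>"
      by (simp add: axis_def abs_mult)
    ultimately have "\<bar>2 * J0_sq'' s * w $ j * w $ i + J0_sq' s * axis j 1 $ i\<bar> \<le> kernel_envelope s"
      using kernel_envelope_ge(3)[OF s0] abs_triangle_ineq[of "2 * J0_sq'' s * w $ j * w $ i" "J0_sq' s * axis j 1 $ i"]
      by (simp add: abs_mult mult_ac)
    then show ?thesis by (simp add: abs_mult)
  qed
  show ?thesis
  proof (cases rule: K_ab_S1_cases[OF assms, where x = x and y = y])
    case 1
    with K show ?thesis by (simp add: s_def)
  next
    case (2 i)
    with Ky[of i] show ?thesis by (simp add: pdiff_kernelK_y abs_mult s_def w_def)
  next
    case (3 j)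
    with Ky[of j] show ?thesis by (simp add: pdiff_kernelK_x s_def w_def)
  next
    case (4 i j)
    with Kxy[of j i] show ?thesis by (simp only: pdiff_pdiff_kernelK abs_minus s_def w_def)
  qed
qed

lemma K_ab_small_far:
  assumes "\<epsilon> > 0"
  obtains R where "\<And>\<alpha> \<beta> x y. \<alpha> \<in> S1 \<Longrightarrow> \<beta> \<in> S1 \<Longrightarrow> R \<le> dist x y \<Longrightarrow> \<bar>K_ab \<alpha> \<beta> x y\<bar> < \<epsilon>"
proof -
  have "eventually (\<lambda>s. kernel_envelope s < \<epsilon> / (4 * pi)) at_top"
    using order_tendstoD(2)[OF kernel_envelope_tendsto_zero] assms by simp
  then obtain S where S: "\<And>s. S \<le> s \<Longrightarrow> kernel_envelope s < \<epsilon> / (4 * pi)"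
    by (auto simp: eventually_at_top_linorder)
  have "\<bar>K_ab \<alpha> \<beta> x y\<bar> < \<epsilon>" if "\<alpha> \<in> S1" "\<beta> \<in> S1" "sqrt \<bar>S\<bar> \<le> dist x y" for \<alpha> \<beta> x y
  proof -
    have "\<bar>S\<bar> \<le> (dist x y)\<^sup>2"
      using real_sqrt_le_iff[of "\<bar>S\<bar>" "(dist x y)\<^sup>2"] that(3) by simp
    then have "kernel_envelope ((norm (x - y))\<^sup>2) < \<epsilon> / (4 * pi)"
      by (intro S) (simp add: dist_norm)
    with abs_K_ab_le[OF that(1,2), of x y] show ?thesis
      by (simp add: field_simps)
  qed
  then show ?thesis
    using that by blast
qed

section \<open>Counting singular pairs\<close>

lemma card_pairs_with_bounded_difference:
  fixes A D :: "'a::ab_group_add set"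
  assumes "finite A" "finite D" "\<And>a b. P a b \<Longrightarrow> b - a \<in> D"
  shows "card {(a, b). a \<in> A \<and> b \<in> A \<and> P a b} \<le> card A * card D"
proof -
  have "{(a, b). a \<in> A \<and> b \<in> A \<and> P a b} \<subseteq> (\<lambda>(a, d). (a, a + d)) ` (A \<times> D)"
  proof clarify
    fix a b assume "a \<in> A" "P a b"
    then show "(a, b) \<in> (\<lambda>(a, d). (a, a + d)) ` (A \<times> D)"
      using assms(3) by (auto intro!: image_eqI[of _ _ "(a, b - a)"])
  qed
  then have "card {(a, b). a \<in> A \<and> b \<in> A \<and> P a b} \<le> card ((\<lambda>(a, d). (a, a + d)) ` (A \<times> D))"
    using assms(1,2) by (intro card_mono) auto
  also have "\<dots> \<le> card A * card D"
    using card_image_le[of "A \<times> D"] assms(1,2) by (simp add: card_cartesian_product)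
  finally show ?thesis .
qed

lemma abs_floor_diff_le_ceiling: "\<bar>\<lfloor>a :: real\<rfloor> - \<lfloor>b\<rfloor>\<bar> \<le> \<lceil>\<bar>a - b\<bar>\<rceil>"
  by linarith

definition int_box :: "int \<Rightarrow> (int \<times> int) set" where
  "int_box T = {-T..T} \<times> {-T..T}"

lemma mem_int_box_iff: "z \<in> int_box T \<longleftrightarrow> \<bar>fst z\<bar> \<le> T \<and> \<bar>snd z\<bar> \<le> T"
  by (cases z) (auto simp: int_box_def abs_le_iff)

lemma finite_int_box: "finite (int_box T)"
  by (simp add: int_box_def)

lemma card_int_box: "0 \<le> T \<Longrightarrow> card (int_box T) = nat (2 * T + 1) ^ 2"
  by (simp add: int_box_def card_cartesian_product power2_eq_square)

lemma mem_sq_iff_floor: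
  assumes "N > 0"
  shows "x \<in> sq N z \<longleftrightarrow> (\<lfloor>N * x $ 1\<rfloor>, \<lfloor>N * x $ 2\<rfloor>) = z"
  using assms by (cases z) (auto simp: sq_def floor_eq_iff divide_le_eq less_divide_eq mult.commute)

lemma sq_index_diff_in_box:
  assumes "N > 0" "x \<in> sq N zx" "y \<in> sq N zy"
  shows "zy - zx \<in> int_box \<lceil>N * dist x y\<rceil>"
proof -
  have diff: "\<bar>\<lfloor>N * y $ k\<rfloor> - \<lfloor>N * x $ k\<rfloor>\<bar> \<le> \<lceil>N * dist x y\<rceil>" for k
  proof -
    have "\<bar>N * y $ k - N * x $ k\<bar> = N * \<bar>(y - x) $ k\<bar>"
      using assms(1) by (simp add: abs_mult right_diff_distrib[symmetric])
    also have "\<dots> \<le> N * dist x y"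
      using assms(1) component_le_norm_cart[of "y - x" k] by (simp add: dist_norm norm_minus_commute)
    finally show ?thesis
      using abs_floor_diff_le_ceiling ceiling_mono order_trans by blast
  qed
  have "zx = (\<lfloor>N * x $ 1\<rfloor>, \<lfloor>N * x $ 2\<rfloor>)" "zy = (\<lfloor>N * y $ 1\<rfloor>, \<lfloor>N * y $ 2\<rfloor>)"
    using assms by (metis mem_sq_iff_floor)+
  with diff[of 1] diff[of 2] show ?thesis
    by (simp add: mem_int_box_iff)
qed

lemma sq_family_subset_int_box:
  assumes "N > 0"
  shows "sq_family N R \<subseteq> int_box \<lceil>N * R\<rceil>"
proof
  fix z assume "z \<in> sq_family N R"
  then obtain p where "p \<in> sq N z" "norm p < R"
    by (auto simp: sq_family_def)
  then have z: "z = (\<lfloor>N * p $ 1\<rfloor>, \<lfloor>N * p $ 2\<rfloor>)"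
    using assms by (metis mem_sq_iff_floor)
  have floor: "\<bar>\<lfloor>N * p $ k\<rfloor>\<bar> \<le> \<lceil>N * R\<rceil>" for k
  proof -
    have "\<bar>N * p $ k\<bar> \<le> N * R"
      using assms component_le_norm_cart[of p k] \<open>norm p < R\<close> by (simp add: abs_mult)
    have "\<bar>\<lfloor>N * p $ k\<rfloor>\<bar> \<le> \<lceil>\<bar>N * p $ k\<bar>\<rceil>"
      using abs_floor_diff_le_ceiling[of "N * p $ k" 0] by simp
    also have "\<dots> \<le> \<lceil>N * R\<rceil>"
      by (rule ceiling_mono) fact
    finally show ?thesis .
  qed
  with z floor[of 1] floor[of 2] show "z \<in> int_box \<lceil>N * R\<rceil>"
    by (simp add: mem_int_box_iff)
qed

lemma card_sq_family_le:
  assumes "N > 0" "0 \<le> R"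
  shows "real (card (sq_family N R)) \<le> (2 * N * R + 3)\<^sup>2"
proof -
  define T where "T = \<lceil>N * R\<rceil>"
  have "0 \<le> N * R"
    using assms by simp
  then have "0 \<le> T"
    by (simp add: T_def)
  have "card (sq_family N R) \<le> card (int_box T)"
    using sq_family_subset_int_box[OF assms(1)] by (intro card_mono) (auto simp: T_def int_box_def)
  also have "\<dots> = nat (2 * T + 1) ^ 2"
    using \<open>0 \<le> T\<close> by (rule card_int_box)
  finally have "real (card (sq_family N R)) \<le> real (nat (2 * T + 1) ^ 2)"
    by (simp only: of_nat_le_iff)
  also have "\<dots> = (2 * real_of_int T + 1)\<^sup>2"
    using \<open>0 \<le> T\<close> by simp
  also have "\<dots> \<le> (2 * N * R + 3)\<^sup>2"
    using \<open>0 \<le> N * R\<close> ceiling_correct[of "N * R"] by (intro power_mono) (auto simp: T_def)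
  finally show ?thesis .
qed

lemma singular_pair_index_diff_bounded:
  assumes "\<epsilon> > 0" "N > 0"
  obtains T where "\<And>zx zy. singular_pair \<epsilon> N zx zy \<Longrightarrow> zy - zx \<in> int_box T"
proof -
  obtain R where R: "\<And>\<alpha> \<beta> x y. \<alpha> \<in> S1 \<Longrightarrow> \<beta> \<in> S1 \<Longrightarrow> R \<le> dist x y \<Longrightarrow> \<bar>K_ab \<alpha> \<beta> x y\<bar> < \<epsilon>"
    using K_ab_small_far[OF assms(1)] by blast
  have "zy - zx \<in> int_box \<lceil>N * R\<rceil>" if sp: "singular_pair \<epsilon> N zx zy" for zx zy
  proof -
    obtain x y \<alpha> \<beta> where xy: "x \<in> sq N zx" "y \<in> sq N zy" "\<alpha> \<in> S1" "\<beta> \<in> S1" "K_ab \<alpha> \<beta> x y > \<epsilon>"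
      using sp unfolding singular_pair_def by blast
    then have "dist x y < R"
      using R[of \<alpha> \<beta> x y] by fastforce
    then have "\<lceil>N * dist x y\<rceil> \<le> \<lceil>N * R\<rceil>"
      using assms(2) by (intro ceiling_mono) simp
    with sq_index_diff_in_box[OF assms(2) xy(1,2)] show ?thesis
      by (auto simp: int_box_def)
  qed
  then show ?thesis
    using that by blast
qed

lemma card_singular_pairs_le:
  assumes "\<epsilon> > 0" "N > 0"
  obtains C where "\<And>R. 0 \<le> R \<Longrightarrow> real (card {(zx, zy). zx \<in> sq_family N R \<and> zy \<in> sq_family N R
                                                  \<and> singular_pair \<epsilon> N zx zy}) \<le> C * (2 * N * R + 3)\<^sup>2"
proof -
  obtain T where T: "\<And>zx zy. singular_pair \<epsilon> N zx zy \<Longrightarrow> zy - zx \<in> int_box T"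
    using singular_pair_index_diff_bounded[OF assms] by blast
  have "real (card {(zx, zy). zx \<in> sq_family N R \<and> zy \<in> sq_family N R \<and> singular_pair \<epsilon> N zx zy})
      \<le> card (int_box T) * (2 * N * R + 3)\<^sup>2" if "0 \<le> R" for R
  proof -
    have "finite (sq_family N R)"
      by (rule finite_subset[OF sq_family_subset_int_box[OF assms(2)] finite_int_box])
    then have "card {(zx, zy). zx \<in> sq_family N R \<and> zy \<in> sq_family N R \<and> singular_pair \<epsilon> N zx zy}
        \<le> card (sq_family N R) * card (int_box T)"
      by (rule card_pairs_with_bounded_difference[OF _ finite_int_box T])
    then have "real (card {(zx, zy). zx \<in> sq_family N R \<and> zy \<in> sq_family N R \<and> singular_pair \<epsilon> N zx zy})
        \<le> card (int_box T) * real (card (sq_family N R))"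
      by (simp only: mult.commute[of "card (sq_family N R)"] of_nat_mult[symmetric] of_nat_le_iff)
    also have "\<dots> \<le> card (int_box T) * (2 * N * R + 3)\<^sup>2"
      by (intro mult_left_mono card_sq_family_le assms(2) that) simp
    finally show ?thesis .
  qed
  then show ?thesis
    using that by blast
qed

theorem lemma3p3:
  fixes \<epsilon> N :: real and r :: "real \<Rightarrow> real"
  assumes "\<epsilon> > 0" and "N > 0"
    and "\<And>\<alpha> \<beta> zx zy. \<alpha> \<in> S1 \<Longrightarrow> \<beta> \<in> S1 \<Longrightarrow>
           (\<exists>x\<in>sq N zx. \<exists>y\<in>sq N zy. K_ab \<alpha> \<beta> x y > \<epsilon>) \<Longrightarrow>
           (\<forall>a\<in>sq N zx. \<forall>b\<in>sq N zy. K_ab \<alpha> \<beta> a b > \<epsilon> / 2)"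
    and "filterlim r at_top at_top"
  shows "(\<lambda>l. real (card {(zx, zy). zx \<in> sq_family N (r l) \<and> zy \<in> sq_family N (r l)
                                   \<and> singular_pair \<epsilon> N zx zy}))
         \<in> o[at_top](\<lambda>l. (r l)\<^sup>2 * ln (r l))"
proof -
  obtain C where count: "\<And>R. 0 \<le> R \<Longrightarrow> real (card {(zx, zy). zx \<in> sq_family N R \<and> zy \<in> sq_family N R
                                                  \<and> singular_pair \<epsilon> N zx zy}) \<le> C * (2 * N * R + 3)\<^sup>2"
    using card_singular_pairs_le[OF assms(1,2)] by blast
  have "eventually (\<lambda>l. 0 \<le> r l) at_top"
    using assms(4) unfolding filterlim_at_top by blast
  then have "(\<lambda>l. real (card {(zx, zy). zx \<in> sq_family N (r l) \<and> zy \<in> sq_family N (r l)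
                                   \<and> singular_pair \<epsilon> N zx zy})) \<in> O[at_top](\<lambda>l. (2 * N * r l + 3)\<^sup>2)"
    by (intro bigoI[of _ C]) (auto elim!: eventually_mono simp: count)
  also have "(\<lambda>x. (2 * N * x + 3)\<^sup>2) \<in> o[at_top](\<lambda>x. x\<^sup>2 * ln x)"
    using assms(2) by real_asymp
  then have "(\<lambda>l. (2 * N * r l + 3)\<^sup>2) \<in> o[at_top](\<lambda>l. (r l)\<^sup>2 * ln (r l))"
    by (rule landau_o.small.compose[OF _ assms(4)])
  finally show ?thesis .
qed

end
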